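(* For every rational number $\alpha>0$ there exists a rational function $g(t)=\sum_{k=1}^N\frac{a_k}{t-iw_k}$ (with $a_k,w_k\in\mathbb{C}$, $a_k\ne0$, $\Re w_k\ne0$) such that the Gabor system $\mathcal{G}(g;\alpha,1)$ is not a frame in $L^2(\mathbb{R})$.
   Context: $\mathcal{G}(g;\alpha,1)=\{e^{2\pi i n t}g(t-\alpha m)\}_{m,n\in\mathbb{Z}}$; it is a frame in $L^2(\mathbb{R})$ if there are $0<A\le B<\infty$ with $A\|f\|^2\le\sum_{m,n}|\langle f, e^{2\pi i n\cdot}g(\cdot-\alpha m)\rangle|^2\le B\|f\|^2$ for all $f\in L^2(\mathbb{R})$. *)

theory Defs
  imports "HOL-Analysis.Analysis"
begin

definition L2 :: "(real \<Rightarrow> complex) set" where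
  "L2 = {f. f \<in> borel_measurable lebesgue \<and> integrable lebesgue (\<lambda>t. (cmod (f t))\<^sup>2)}"

definition L2_inner :: "(real \<Rightarrow> complex) \<Rightarrow> (real \<Rightarrow> complex) \<Rightarrow> complex" where
  "L2_inner f h = (LINT t|lebesgue. f t * cnj (h t))"

definition L2_norm_sq :: "(real \<Rightarrow> complex) \<Rightarrow> real" where
  "L2_norm_sq f = (LINT t|lebesgue. (cmod (f t))\<^sup>2)"

definition gabor_atom :: "(real \<Rightarrow> complex) \<Rightarrow> real \<Rightarrow> int \<Rightarrow> int \<Rightarrow> real \<Rightarrow> complex" where
  "gabor_atom g \<alpha> m n t = exp (2 * of_real pi * \<i> * of_int n * of_real t) * g (t - \<alpha> * of_int m)"

definition gabor_frame :: "(real \<Rightarrow> complex) \<Rightarrow> real \<Rightarrow> bool" where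
  "gabor_frame g \<alpha> \<longleftrightarrow>
     (\<exists>(A::real) B. 0 < A \<and> A \<le> B \<and>
       (\<forall>f\<in>L2.
          let c = (\<lambda>(m, n). (cmod (L2_inner f (gabor_atom g \<alpha> m n)))\<^sup>2) in
          (c summable_on (UNIV :: (int \<times> int) set)) \<and>
          A * L2_norm_sq f \<le> infsum c UNIV \<and> infsum c UNIV \<le> B * L2_norm_sq f))"

end

(*
  Here g(t) = h(t) - h(t + 1) with h(t) = 1/(t - i). Write alpha = p/q and test the lower frame
  bound on f = indicator of [0, K] with K = p j, so that K = alpha L for L = q j. Integrating
  the difference over [0, K] telescopes: the Gabor coefficient <f, M_n T_(alpha m) g> equals
  c(m, n) - c(m - L, n), where c(m, n) is the n-th Fourier coefficient on [0, 1] of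
  conj h(t - alpha m). By Bessel's inequality and the decay of h,
  sum_n |c(m, n)|^2 <= C / (1 + m^2), so the sum of all squared coefficients is bounded
  independently of j, whereas ||f||^2 = K grows without bound.
*)

theory Submission
  imports Defs
begin

definition fourier_exp :: "int \<Rightarrow> real \<Rightarrow> complex" where
  "fourier_exp n t = exp (2 * of_real pi * \<i> * of_int n * of_real t)"

definition fourier_coeff :: "(real \<Rightarrow> complex) \<Rightarrow> int \<Rightarrow> complex" where
  "fourier_coeff \<psi> n = integral {0..1} (\<lambda>t. \<psi> t * cnj (fourier_exp n t))"

lemma continuous_on_fourier_exp [continuous_intros]: "continuous_on S (fourier_exp n)"
  unfolding fourier_exp_def by (intro continuous_intros)

lemma fourier_exp_add_int: "fourier_exp n (t + of_int k) = fourier_exp n t"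
proof -
  have "fourier_exp n (t + of_int k) = fourier_exp n t * exp ((2 * of_int (n * k) * pi) * \<i>)"
    unfolding fourier_exp_def by (simp add: exp_add[symmetric] algebra_simps)
  also have "exp ((2 * of_int (n * k) * pi) * \<i>) = 1"
    by (rule exp_integer_2pi) simp
  finally show ?thesis by simp
qed

lemma fourier_exp_mult_cnj: "fourier_exp n t * cnj (fourier_exp m t) = fourier_exp (n - m) t"
  by (simp add: fourier_exp_def exp_cnj exp_add[symmetric] algebra_simps)

lemma integral_fourier_exp: "integral {0..1} (fourier_exp k) = (if k = 0 then 1 else 0)"
proof (cases "k = 0")
  case True
  then have "fourier_exp k = (\<lambda>_. 1)" by (simp add: fourier_exp_def fun_eq_iff)
  then show ?thesis using True by simp
next
  case False
  define c where "c = 2 * of_real pi * \<i> * (of_int k :: complex)"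
  have "c \<noteq> 0" using False by (simp add: c_def)
  have exp_c: "fourier_exp k t = exp (c * of_real t)" for t
    by (simp add: fourier_exp_def c_def)
  have "((\<lambda>t. exp (c * of_real t) / c) has_vector_derivative fourier_exp k t) (at t within {0..1})"
    for t
    by (rule has_vector_derivative_real_field[of "\<lambda>z. exp (c * z) / c", simplified])
      (use \<open>c \<noteq> 0\<close> in \<open>auto intro!: derivative_eq_intros simp: exp_c\<close>)
  then have "(fourier_exp k has_integral (exp (c * of_real 1) / c - exp (c * of_real 0) / c)) {0..1}"
    by (intro fundamental_theorem_of_calculus) auto
  moreover have "exp (c * of_real 1) = 1"
    using fourier_exp_add_int[of k 0 1] by (simp add: exp_c)
  ultimately show ?thesis using False by (simp add: integral_unique)
qed

lemma fourier_exp_orthonormal: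
  "integral {0..1} (\<lambda>t. fourier_exp n t * cnj (fourier_exp m t)) = (if n = m then 1 else 0)"
  by (simp add: fourier_exp_mult_cnj integral_fourier_exp)

lemma integral_mult_cnj_trig_poly:
  assumes \<psi>: "continuous_on {0..1} \<psi>" and N: "finite N"
  shows "integral {0..1} (\<lambda>t. \<psi> t * cnj (\<Sum>n\<in>N. c n * fourier_exp n t))
           = (\<Sum>n\<in>N. fourier_coeff \<psi> n * cnj (c n))"
proof -
  have "integral {0..1} (\<lambda>t. \<psi> t * cnj (\<Sum>n\<in>N. c n * fourier_exp n t))
          = integral {0..1} (\<lambda>t. \<Sum>n\<in>N. cnj (c n) * (\<psi> t * cnj (fourier_exp n t)))"
    by (simp add: sum_distrib_left algebra_simps)
  also have "\<dots> = (\<Sum>n\<in>N. integral {0..1} (\<lambda>t. cnj (c n) * (\<psi> t * cnj (fourier_exp n t))))"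
    by (intro integral_sum N integrable_continuous_interval continuous_intros \<psi>)
  finally show ?thesis by (simp add: fourier_coeff_def mult.commute)
qed

lemma fourier_coeff_trig_poly:
  assumes "finite N" "m \<in> N"
  shows "fourier_coeff (\<lambda>t. \<Sum>n\<in>N. c n * fourier_exp n t) m = c m"
proof -
  have "fourier_coeff (\<lambda>t. \<Sum>n\<in>N. c n * fourier_exp n t) m
          = (\<Sum>n\<in>N. integral {0..1} (\<lambda>t. c n * (fourier_exp n t * cnj (fourier_exp m t))))"
    unfolding fourier_coeff_def sum_distrib_right mult.assoc
    by (intro integral_sum assms(1) integrable_continuous_interval continuous_intros)
  also have "\<dots> = (\<Sum>n\<in>N. c n * (if n = m then 1 else 0))"
    by (simp add: fourier_exp_orthonormal)
  finally show ?thesis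
    using assms by (simp add: if_distrib cong: if_cong)
qed

lemma integral_mult_cnj_self:
  fixes f :: "real \<Rightarrow> complex"
  assumes "continuous_on {a..b} f"
  shows "integral {a..b} (\<lambda>t. f t * cnj (f t)) = of_real (integral {a..b} (\<lambda>t. (cmod (f t))\<^sup>2))"
proof -
  have "(\<lambda>t. (cmod (f t))\<^sup>2) integrable_on {a..b}"
    by (intro integrable_continuous_interval continuous_intros assms)
  from has_integral_of_real[OF integrable_integral[OF this]]
  have "integral {a..b} (\<lambda>t. complex_of_real ((cmod (f t))\<^sup>2))
          = complex_of_real (integral {a..b} (\<lambda>t. (cmod (f t))\<^sup>2))"
    by (rule integral_unique)
  then show ?thesis by (simp only: complex_norm_square)
qed

lemma bessel_inequality:
  assumes \<psi>: "continuous_on {0..1} \<psi>" and N: "finite N"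
  shows "(\<Sum>n\<in>N. (cmod (fourier_coeff \<psi> n))\<^sup>2) \<le> integral {0..1} (\<lambda>t. (cmod (\<psi> t))\<^sup>2)"
proof -
  define S where "S = (\<Sum>n\<in>N. (cmod (fourier_coeff \<psi> n))\<^sup>2)"
  define P where "P t = (\<Sum>n\<in>N. fourier_coeff \<psi> n * fourier_exp n t)" for t
  have P: "continuous_on {0..1} P"
    unfolding P_def by (intro continuous_intros)
  have \<psi>_P: "integral {0..1} (\<lambda>t. \<psi> t * cnj (P t)) = of_real S"
    unfolding P_def S_def integral_mult_cnj_trig_poly[OF \<psi> N]
    by (simp add: complex_norm_square[symmetric])
  have P_\<psi>: "integral {0..1} (\<lambda>t. P t * cnj (\<psi> t)) = of_real S"
    using arg_cong[OF \<psi>_P, of cnj] by (simp add: integral_cnj mult.commute)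
  have P_P: "integral {0..1} (\<lambda>t. P t * cnj (P t)) = of_real S"
    using integral_mult_cnj_trig_poly[OF P N, of "fourier_coeff \<psi>"] N
    by (simp add: P_def[abs_def] fourier_coeff_trig_poly S_def complex_norm_square[symmetric]
        cong: sum.cong)
  have "of_real (integral {0..1} (\<lambda>t. (cmod (\<psi> t - P t))\<^sup>2))
          = integral {0..1} (\<lambda>t. (\<psi> t - P t) * cnj (\<psi> t - P t))"
    by (intro integral_mult_cnj_self[symmetric] continuous_intros \<psi> P)
  also have "\<dots> = integral {0..1} (\<lambda>t. \<psi> t * cnj (\<psi> t)) - integral {0..1} (\<lambda>t. \<psi> t * cnj (P t))
                  - integral {0..1} (\<lambda>t. P t * cnj (\<psi> t)) + integral {0..1} (\<lambda>t. P t * cnj (P t))"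
    using \<psi> P
    by (simp add: algebra_simps integral_add integral_diff integrable_continuous_interval
        continuous_intros)
  also have "\<dots> = of_real (integral {0..1} (\<lambda>t. (cmod (\<psi> t))\<^sup>2) - S)"
    by (simp add: \<psi>_P P_\<psi> P_P integral_mult_cnj_self[OF \<psi>])
  finally have "integral {0..1} (\<lambda>t. (cmod (\<psi> t - P t))\<^sup>2) = integral {0..1} (\<lambda>t. (cmod (\<psi> t))\<^sup>2) - S"
    by (simp only: of_real_eq_iff)
  moreover have "0 \<le> integral {0..1} (\<lambda>t. (cmod (\<psi> t - P t))\<^sup>2)"
    by (intro integral_nonneg integrable_continuous_interval continuous_intros \<psi> P) auto
  ultimately show ?thesis unfolding S_def by linarith
qed

text \<open>The bound is strengthened for the induction:
  \<open>1/(1 + (R+1)\<^sup>2) \<le> 2/(R+1) - 2/(R+2)\<close> telescopes.\<close>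
lemma sum_inv_one_plus_sq_symmetric_le:
  "(\<Sum>m\<in>{-int R..int R}. 1 / (1 + (real_of_int m)\<^sup>2)) \<le> 5 - 4 / (real R + 1)"
proof (induction R)
  case 0
  then show ?case by simp
next
  case (Suc R)
  have "{-int (Suc R)..int (Suc R)} = insert (int R + 1) (insert (- int R - 1) {-int R..int R})"
    by auto
  then have "(\<Sum>m\<in>{-int (Suc R)..int (Suc R)}. 1 / (1 + (real_of_int m)\<^sup>2))
               = 2 / (1 + (real R + 1)\<^sup>2) + (\<Sum>m\<in>{-int R..int R}. 1 / (1 + (real_of_int m)\<^sup>2))"
    by (simp add: power2_commute add.commute[of 1 "real R"])
  also have "2 / (1 + (real R + 1)\<^sup>2) \<le> 4 / ((real R + 1) * (real R + 2))"
    by (simp add: divide_simps power2_eq_square algebra_simps)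
  also have "\<dots> = 4 / (real R + 1) - 4 / (real R + 2)"
    by (simp add: field_simps)
  also note Suc.IH
  also have "4 / (real R + 1) - 4 / (real R + 2) + (5 - 4 / (real R + 1)) = 5 - 4 / (real (Suc R) + 1)"
    by (simp add: add.commute)
  finally show ?case by simp
qed

lemma sum_inv_one_plus_sq_le:
  fixes M :: "int set"
  assumes "finite M"
  shows "(\<Sum>m\<in>M. 1 / (1 + (real_of_int m)\<^sup>2)) \<le> 5"
proof -
  define R where "R = nat (Max (insert 0 (abs ` M)))"
  have "M \<subseteq> {-int R..int R}"
  proof
    fix m assume "m \<in> M"
    then have "\<bar>m\<bar> \<le> Max (insert 0 (abs ` M))" using assms by (intro Max_ge) auto
    then show "m \<in> {-int R..int R}" unfolding R_def by auto
  qed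
  then have "(\<Sum>m\<in>M. 1 / (1 + (real_of_int m)\<^sup>2)) \<le> (\<Sum>m\<in>{-int R..int R}. 1 / (1 + (real_of_int m)\<^sup>2))"
    by (intro sum_mono2) auto
  also have "\<dots> \<le> 5 - 4 / (real R + 1)"
    by (rule sum_inv_one_plus_sq_symmetric_le)
  also have "\<dots> \<le> 5"
    by simp
  finally show ?thesis .
qed

lemma norm_diff_sq_le:
  fixes x y :: "'a::real_normed_vector"
  shows "(norm (x - y))\<^sup>2 \<le> 2 * (norm x)\<^sup>2 + 2 * (norm y)\<^sup>2"
proof -
  have "(norm (x - y))\<^sup>2 \<le> (norm x + norm y)\<^sup>2"
    by (intro power_mono norm_triangle_ineq4) auto
  also have "\<dots> \<le> 2 * (norm x)\<^sup>2 + 2 * (norm y)\<^sup>2"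
    using zero_le_power2[of "norm x - norm y"] by (simp add: power2_eq_square algebra_simps)
  finally show ?thesis .
qed

lemma sum_sq_diff_shift_le:
  fixes b :: "int \<Rightarrow> int \<Rightarrow> complex" and L :: int
  assumes decay: "\<And>m N. finite N \<Longrightarrow> (\<Sum>n\<in>N. (cmod (b m n))\<^sup>2) \<le> B / (1 + (real_of_int m)\<^sup>2)"
    and "finite F"
  shows "(\<Sum>(m, n)\<in>F. (cmod (b m n - b (m - L) n))\<^sup>2) \<le> 20 * B"
proof -
  define M where "M = fst ` F"
  define N where "N = snd ` F"
  have fin: "finite M" "finite N"
    using \<open>finite F\<close> by (auto simp: M_def N_def)
  have "0 \<le> B"
    using decay[of "{}" 0] by simp
  have rows: "(\<Sum>m\<in>M. \<Sum>n\<in>N. (cmod (b (m - k) n))\<^sup>2) \<le> 5 * B" for k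
  proof -
    have "(\<Sum>m\<in>M. \<Sum>n\<in>N. (cmod (b (m - k) n))\<^sup>2) \<le> (\<Sum>m\<in>M. B / (1 + (real_of_int (m - k))\<^sup>2))"
      by (intro sum_mono decay fin)
    also have "\<dots> = B * (\<Sum>m\<in>(\<lambda>m. m - k) ` M. 1 / (1 + (real_of_int m)\<^sup>2))"
      by (simp add: sum_distrib_left sum.reindex inj_on_def)
    also have "\<dots> \<le> B * 5"
      using \<open>0 \<le> B\<close> fin by (intro mult_left_mono sum_inv_one_plus_sq_le) auto
    finally show ?thesis by simp
  qed
  have "(\<Sum>(m, n)\<in>F. (cmod (b m n - b (m - L) n))\<^sup>2)
          \<le> (\<Sum>(m, n)\<in>F. 2 * (cmod (b m n))\<^sup>2 + 2 * (cmod (b (m - L) n))\<^sup>2)"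
    by (intro sum_mono) (auto simp: norm_diff_sq_le)
  also have "\<dots> \<le> (\<Sum>(m, n)\<in>M \<times> N. 2 * (cmod (b m n))\<^sup>2 + 2 * (cmod (b (m - L) n))\<^sup>2)"
    using fin by (intro sum_mono2) (auto simp: M_def N_def intro: rev_image_eqI)
  also have "\<dots> = 2 * (\<Sum>m\<in>M. \<Sum>n\<in>N. (cmod (b (m - 0) n))\<^sup>2)
                  + 2 * (\<Sum>m\<in>M. \<Sum>n\<in>N. (cmod (b (m - L) n))\<^sup>2)"
    by (simp add: sum.distrib sum_distrib_left sum.cartesian_product split_def)
  also have "\<dots> \<le> 20 * B"
    using rows[of 0] rows[of L] by simp
  finally show ?thesis .
qed

definition cauchy_kernel :: "real \<Rightarrow> complex" where
  "cauchy_kernel x = 1 / (of_real x + \<i>)"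

lemma continuous_on_cauchy_kernel [continuous_intros]:
  "continuous_on S f \<Longrightarrow> continuous_on S (\<lambda>t. cauchy_kernel (f t))"
  unfolding cauchy_kernel_def by (intro continuous_intros) (auto simp: complex_eq_iff)

lemma norm_cauchy_kernel_sq: "(cmod (cauchy_kernel x))\<^sup>2 = 1 / (x\<^sup>2 + 1)"
proof -
  have "(cmod (of_real x + \<i>))\<^sup>2 = x\<^sup>2 + 1"
    by (simp add: cmod_power2)
  then show ?thesis
    by (simp add: cauchy_kernel_def norm_divide power_divide)
qed

lemma inv_sq_plus_one_shift_le:
  fixes \<alpha> t :: real and m :: int
  assumes "\<alpha> > 0" and "0 \<le> t" "t \<le> 1"
  shows "1 / ((t - \<alpha> * m)\<^sup>2 + 1) \<le> 3 / min 1 (\<alpha>\<^sup>2) / (1 + (real_of_int m)\<^sup>2)"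
proof -
  define \<mu> where "\<mu> = min 1 (\<alpha>\<^sup>2)"
  have "\<mu> > 0"
    using assms by (simp add: \<mu>_def)
  have "\<mu> \<le> 1" "\<mu> \<le> \<alpha>\<^sup>2"
    by (auto simp: \<mu>_def)
  then have "\<mu> * (1 + (real_of_int m)\<^sup>2) \<le> 1 + (\<alpha> * m)\<^sup>2"
    by (simp add: distrib_left power_mult_distrib add_mono mult_right_mono)
  moreover have "(\<alpha> * m)\<^sup>2 \<le> 2 * (t - \<alpha> * m)\<^sup>2 + 2 * t\<^sup>2"
    using norm_diff_sq_le[of t "t - \<alpha> * m"] by simp
  moreover have "t\<^sup>2 \<le> 1"
    using assms by (simp add: power_le_one)
  ultimately have "\<mu> * (1 + (real_of_int m)\<^sup>2) \<le> 3 * ((t - \<alpha> * m)\<^sup>2 + 1)"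
    using zero_le_power2[of "t - \<alpha> * m"] unfolding distrib_left by linarith
  then show ?thesis
    using \<open>\<mu> > 0\<close> by (simp add: \<mu>_def[symmetric] field_simps add_pos_nonneg)
qed

lemma sum_sq_fourier_coeff_cauchy_kernel_le:
  assumes "\<alpha> > 0" and "finite N"
  shows "(\<Sum>n\<in>N. (cmod (fourier_coeff (\<lambda>t. cauchy_kernel (t - \<alpha> * of_int m)) n))\<^sup>2)
           \<le> 3 / min 1 (\<alpha>\<^sup>2) / (1 + (real_of_int m)\<^sup>2)"
proof -
  have "(\<Sum>n\<in>N. (cmod (fourier_coeff (\<lambda>t. cauchy_kernel (t - \<alpha> * of_int m)) n))\<^sup>2)
          \<le> integral {0..1} (\<lambda>t. (cmod (cauchy_kernel (t - \<alpha> * of_int m)))\<^sup>2)"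
    by (intro bessel_inequality continuous_intros \<open>finite N\<close>)
  also have "\<dots> \<le> integral {0..1::real} (\<lambda>_. 3 / min 1 (\<alpha>\<^sup>2) / (1 + (real_of_int m)\<^sup>2))"
    using inv_sq_plus_one_shift_le[OF \<open>\<alpha> > 0\<close>]
    by (intro integral_le integrable_continuous_interval continuous_intros)
      (auto simp: norm_cauchy_kernel_sq)
  finally show ?thesis by simp
qed

lemma indicator_in_L2: "(\<lambda>t. complex_of_real (indicator {a..b} t)) \<in> L2"
proof -
  have "integrable lebesgue (\<lambda>t. indicator {a..b} t *\<^sub>R (1::real))"
    using absolutely_integrable_continuous_real[of a b "\<lambda>_. 1::real"]
    by (simp add: set_integrable_def)
  moreover have "(cmod (complex_of_real (indicator {a..b} t)))\<^sup>2 = indicator {a..b} t *\<^sub>R (1::real)" for t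
    by (simp add: indicator_def)
  ultimately show ?thesis
    unfolding L2_def by simp
qed

lemma L2_norm_sq_indicator:
  assumes "a \<le> b"
  shows "L2_norm_sq (\<lambda>t. complex_of_real (indicator {a..b} t)) = b - a"
proof -
  have "(cmod (complex_of_real (indicator {a..b} t)))\<^sup>2 = indicator {a..b} t *\<^sub>R (1::real)" for t
    by (simp add: indicator_def)
  then have "L2_norm_sq (\<lambda>t. complex_of_real (indicator {a..b} t))
               = set_lebesgue_integral lebesgue {a..b} (\<lambda>_. 1::real)"
    by (simp add: L2_norm_sq_def set_lebesgue_integral_def)
  also have "\<dots> = integral {a..b} (\<lambda>_. 1::real)"
    by (intro set_lebesgue_integral_eq_integral(2) absolutely_integrable_continuous_real
        continuous_intros)
  finally show ?thesis
    using assms by simp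
qed

lemma L2_inner_indicator:
  assumes "continuous_on {a..b} h"
  shows "L2_inner (\<lambda>t. complex_of_real (indicator {a..b} t)) h = integral {a..b} (\<lambda>t. cnj (h t))"
proof -
  have "L2_inner (\<lambda>t. complex_of_real (indicator {a..b} t)) h
          = set_lebesgue_integral lebesgue {a..b} (\<lambda>t. cnj (h t))"
    by (simp add: L2_inner_def set_lebesgue_integral_def scaleR_conv_of_real)
  also have "\<dots> = integral {a..b} (\<lambda>t. cnj (h t))"
    by (intro set_lebesgue_integral_eq_integral(2) absolutely_integrable_continuous_real
        continuous_intros assms)
  finally show ?thesis .
qed

lemma integral_telescope:
  fixes \<psi> :: "real \<Rightarrow> 'a::banach"
  assumes \<psi>: "continuous_on UNIV \<psi>" and "0 \<le> K"
  shows "integral {0..K} (\<lambda>t. \<psi> t - \<psi> (t + 1))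
           = integral {0..1} \<psi> - integral {0..1} (\<lambda>t. \<psi> (t + K))"
proof -
  have int: "\<psi> integrable_on {a..b}" for a b
    by (intro integrable_continuous_interval continuous_on_subset[OF \<psi>]) auto
  have "integral {0..K} \<psi> + integral {K..K + 1} \<psi> = integral {0..K + 1} \<psi>"
    using \<open>0 \<le> K\<close> by (intro Henstock_Kurzweil_Integration.integral_combine int) auto
  also have "\<dots> = integral {0..1} \<psi> + integral {1..K + 1} \<psi>"
    using \<open>0 \<le> K\<close> by (intro Henstock_Kurzweil_Integration.integral_combine[symmetric] int) auto
  finally have "integral {0..K} \<psi> - integral {1..K + 1} \<psi> = integral {0..1} \<psi> - integral {K..K + 1} \<psi>"
    by (simp add: algebra_simps)
  moreover have "integral {0..K} (\<lambda>t. \<psi> (t + 1)) = integral {1..K + 1} \<psi>"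
    using integral_shift_real_ivl[of 1 1 "K + 1" \<psi>] by simp
  moreover have "integral {0..1} (\<lambda>t. \<psi> (t + K)) = integral {K..K + 1} \<psi>"
    using integral_shift_real_ivl[of K K "K + 1" \<psi>] by simp
  moreover have "(\<lambda>t. \<psi> (t + 1)) integrable_on {0..K}"
    by (intro integrable_continuous_interval continuous_on_compose2[OF \<psi>] continuous_intros) auto
  ultimately show ?thesis
    by (simp add: integral_diff int)
qed

lemma L2_inner_indicator_gabor_atom:
  fixes K L m n :: int
  assumes \<phi>: "continuous_on UNIV \<phi>" and g: "\<And>x. cnj (g x) = \<phi> x - \<phi> (x + 1)"
    and "0 \<le> K" and KL: "\<alpha> * of_int L = of_int K"
  shows "L2_inner (\<lambda>t. complex_of_real (indicator {0..real_of_int K} t)) (gabor_atom g \<alpha> m n)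
           = fourier_coeff (\<lambda>t. \<phi> (t - \<alpha> * of_int m)) n
             - fourier_coeff (\<lambda>t. \<phi> (t - \<alpha> * of_int (m - L))) n"
proof -
  define \<psi> where "\<psi> t = \<phi> (t - \<alpha> * of_int m) * cnj (fourier_exp n t)" for t
  have \<phi>_shift: "continuous_on UNIV (\<lambda>t. \<phi> (t + c))" for c
    by (intro continuous_on_compose2[OF \<phi>] continuous_intros) auto
  have \<psi>: "continuous_on UNIV \<psi>"
    unfolding \<psi>_def using \<phi>_shift[of "- \<alpha> * of_int m"] by (intro continuous_intros) simp
  have atom: "cnj (gabor_atom g \<alpha> m n t) = \<psi> t - \<psi> (t + 1)" for t
  proof -
    have "gabor_atom g \<alpha> m n t = fourier_exp n t * g (t - \<alpha> * of_int m)"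
      by (simp add: gabor_atom_def fourier_exp_def)
    then show ?thesis
      using fourier_exp_add_int[of n t 1] by (simp add: g \<psi>_def algebra_simps)
  qed
  have "continuous_on UNIV (gabor_atom g \<alpha> m n)"
  proof -
    have "gabor_atom g \<alpha> m n = (\<lambda>t. cnj (\<psi> t - \<psi> (t + 1)))"
      using atom by (metis complex_cnj_cnj)
    then show ?thesis
      using \<psi> by (simp add: continuous_on_compose2[OF \<psi>] continuous_intros)
  qed
  then have "L2_inner (\<lambda>t. complex_of_real (indicator {0..real_of_int K} t)) (gabor_atom g \<alpha> m n)
               = integral {0..real_of_int K} (\<lambda>t. \<psi> t - \<psi> (t + 1))"
    by (simp add: L2_inner_indicator continuous_on_subset atom)
  also have "\<dots> = integral {0..1} \<psi> - integral {0..1} (\<lambda>t. \<psi> (t + of_int K))"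
    using \<open>0 \<le> K\<close> by (intro integral_telescope \<psi>) simp
  also have "(\<lambda>t. \<psi> (t + of_int K)) = (\<lambda>t. \<phi> (t - \<alpha> * of_int (m - L)) * cnj (fourier_exp n t))"
    using KL by (simp add: \<psi>_def fourier_exp_add_int algebra_simps)
  finally show ?thesis
    by (simp add: fourier_coeff_def \<psi>_def)
qed

lemma not_gabor_frame_if_bounded_on_large_norms:
  assumes "\<And>R. \<exists>f\<in>L2. R \<le> L2_norm_sq f \<and>
             (\<forall>F. finite F \<longrightarrow> (\<Sum>(m, n)\<in>F. (cmod (L2_inner f (gabor_atom g \<alpha> m n)))\<^sup>2) \<le> C)"
  shows "\<not> gabor_frame g \<alpha>"
proof
  assume "gabor_frame g \<alpha>"
  then obtain A B where "0 < A" and frame: "\<forall>f\<in>L2.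
      let c = (\<lambda>(m, n). (cmod (L2_inner f (gabor_atom g \<alpha> m n)))\<^sup>2) in
      (c summable_on UNIV) \<and> A * L2_norm_sq f \<le> infsum c UNIV \<and> infsum c UNIV \<le> B * L2_norm_sq f"
    unfolding gabor_frame_def by blast
  obtain f where "f \<in> L2" and large: "(\<bar>C\<bar> + 1) / A \<le> L2_norm_sq f"
    and bounded: "\<And>F. finite F \<Longrightarrow> (\<Sum>(m, n)\<in>F. (cmod (L2_inner f (gabor_atom g \<alpha> m n)))\<^sup>2) \<le> C"
    using assms by blast
  define c where "c = (\<lambda>(m, n). (cmod (L2_inner f (gabor_atom g \<alpha> m n)))\<^sup>2)"
  have "c summable_on UNIV" and lower: "A * L2_norm_sq f \<le> infsum c UNIV"
    using frame \<open>f \<in> L2\<close> by (auto simp: c_def Let_def)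
  have "infsum c UNIV \<le> C"
    using \<open>c summable_on UNIV\<close> by (rule infsum_le_finite_sums) (simp add: c_def bounded)
  moreover have "\<bar>C\<bar> + 1 \<le> A * L2_norm_sq f"
    using large \<open>0 < A\<close> by (simp add: field_simps)
  ultimately show False
    using lower by linarith
qed

lemma Rats_int_multiple_ge:
  fixes \<alpha> R :: real
  assumes "\<alpha> \<in> \<rat>" and "\<alpha> > 0"
  obtains K L :: int where "R \<le> of_int K" and "0 \<le> K" and "\<alpha> * of_int L = of_int K"
proof -
  obtain p q :: int where "q > 0" and pq: "\<alpha> = of_int p / of_int q"
    using \<open>\<alpha> \<in> \<rat>\<close> by (metis Rats_cases')
  have "p > 0"
    using \<open>\<alpha> > 0\<close> \<open>q > 0\<close> unfolding pq by (simp add: zero_less_divide_iff)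
  define j where "j = \<lceil>\<bar>R\<bar>\<rceil>"
  have "0 \<le> j" and "R \<le> of_int j"
    unfolding j_def by (auto intro: order_trans[OF abs_ge_self le_of_int_ceiling])
  then have "R \<le> of_int (p * j)"
    using \<open>p > 0\<close> mult_right_mono[of 1 p j] by linarith
  moreover have "0 \<le> p * j" and "\<alpha> * of_int (q * j) = of_int (p * j)"
    using \<open>p > 0\<close> \<open>q > 0\<close> \<open>0 \<le> j\<close> by (simp_all add: pq)
  ultimately show ?thesis
    using that by blast
qed

lemma not_gabor_frame_cauchy_kernel_difference:
  assumes "\<alpha> \<in> \<rat>" and "\<alpha> > 0" and g: "\<And>x. cnj (g x) = cauchy_kernel x - cauchy_kernel (x + 1)"
  shows "\<not> gabor_frame g \<alpha>"
proof (rule not_gabor_frame_if_bounded_on_large_norms)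
  fix R :: real
  obtain K L :: int where "R \<le> of_int K" and "0 \<le> K" and KL: "\<alpha> * of_int L = of_int K"
    using Rats_int_multiple_ge[OF assms(1,2)] .
  have cauchy_kernel: "continuous_on UNIV cauchy_kernel"
    using continuous_on_cauchy_kernel[OF continuous_on_id] by simp
  show "\<exists>f\<in>L2. R \<le> L2_norm_sq f \<and> (\<forall>F. finite F \<longrightarrow>
          (\<Sum>(m, n)\<in>F. (cmod (L2_inner f (gabor_atom g \<alpha> m n)))\<^sup>2) \<le> 20 * (3 / min 1 (\<alpha>\<^sup>2)))"
  proof (intro bexI conjI allI impI)
    show "R \<le> L2_norm_sq (\<lambda>t. complex_of_real (indicator {0..real_of_int K} t))"
      using \<open>0 \<le> K\<close> \<open>R \<le> of_int K\<close> by (simp add: L2_norm_sq_indicator)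
    fix F :: "(int \<times> int) set"
    assume "finite F"
    show "(\<Sum>(m, n)\<in>F. (cmod (L2_inner (\<lambda>t. complex_of_real (indicator {0..real_of_int K} t))
             (gabor_atom g \<alpha> m n)))\<^sup>2) \<le> 20 * (3 / min 1 (\<alpha>\<^sup>2))"
      using sum_sq_diff_shift_le[OF sum_sq_fourier_coeff_cauchy_kernel_le[OF \<open>\<alpha> > 0\<close>] \<open>finite F\<close>,
          where L = L]
      by (simp add: L2_inner_indicator_gabor_atom[OF cauchy_kernel g \<open>0 \<le> K\<close> KL])
  qed (rule indicator_in_L2)
qed

theorem proposition5p3:
  fixes \<alpha> :: real
  assumes "\<alpha> \<in> \<rat>" and "\<alpha> > 0"
  shows "\<exists>(N::nat) (a::nat \<Rightarrow> complex) (w::nat \<Rightarrow> complex).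
           N \<ge> 1 \<and> inj_on w {1..N} \<and>
           (\<forall>k\<in>{1..N}. a k \<noteq> 0 \<and> Re (w k) \<noteq> 0) \<and>
           \<not> gabor_frame (\<lambda>t. \<Sum>k=1..N. a k / (of_real t - \<i> * w k)) \<alpha>"
proof -
  define a :: "nat \<Rightarrow> complex" where "a k = (if k = 1 then 1 else -1)" for k
  define w :: "nat \<Rightarrow> complex" where "w k = (if k = 1 then 1 else 1 + \<i>)" for k
  define g where "g t = (\<Sum>k=1..2. a k / (of_real t - \<i> * w k))" for t
  have two: "{1..2::nat} = {1, 2}"
    by auto
  have "cnj (g x) = cauchy_kernel x - cauchy_kernel (x + 1)" for x
    unfolding g_def two by (simp add: a_def w_def cauchy_kernel_def algebra_simps)
  then have "\<not> gabor_frame g \<alpha>"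
    using assms by (intro not_gabor_frame_cauchy_kernel_difference)
  then show ?thesis
    by (intro exI[of _ 2] exI[of _ a] exI[of _ w])
      (auto simp: g_def[abs_def] two a_def w_def inj_on_def complex_eq_iff)
qed

end
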